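(* Let $\varepsilon\in(0,\tfrac12)$. Let $G$ and $H$ be bipartite graphs, both with vertex classes $Z$ and $W$, where $|Z|=z$, $|W|=n$, and $z>\tfrac{2}{\varepsilon}$. Suppose that (1) $d_G(x)>\left(\tfrac12+\varepsilon\right)n$ for all $x\in Z$; (2) $d_G(y)>\left(\tfrac12+\tfrac{\varepsilon}{2}\right)z$ for all $y\in W$; (3) there is an $M\in\mathbb{N}$ and a $\delta\le\tfrac{\varepsilon}{10}$ such that $M\le d_H(x)\le M(1+\delta)$ for all $x\in Z$; (4) $d_H(y)=1$ for all $y\in W$. Then $H$ can be embedded into $G$, i.e. $G$ contains a subgraph isomorphic to $H$ via an isomorphism mapping $Z$ onto $Z$ and $W$ onto $W$.
   Context: All graphs are simple. $d_G(v)$ denotes the degree of vertex $v$ in graph $G$. *)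

theory Defs
  imports Complex_Main
begin

(* A simple graph on a vertex type 'a is given by a set of edges, each edge
   being a 2-element set of vertices. *)

definition bipartite_graph :: "'a set \<Rightarrow> 'a set \<Rightarrow> 'a set set \<Rightarrow> bool" where
  "bipartite_graph Z W E \<longleftrightarrow>
     finite Z \<and> finite W \<and> Z \<inter> W = {} \<and>
     (\<forall>e\<in>E. \<exists>x\<in>Z. \<exists>y\<in>W. e = {x, y})"

definition degree :: "'a set set \<Rightarrow> 'a \<Rightarrow> nat" where
  "degree E v = card {e\<in>E. v \<in> e}"

definition bip_embeds :: "'a set \<Rightarrow> 'a set \<Rightarrow> 'a set set \<Rightarrow> 'a set set \<Rightarrow> bool" where
  "bip_embeds Z W H G \<longleftrightarrow>
     (\<exists>f. bij_betw f Z Z \<and> bij_betw f W W \<and>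
          (\<forall>e\<in>H. f ` e \<in> G))"

end

theory Submission
  imports Defs
begin

text \<open>
  Since every vertex of \<open>W\<close> has \<open>H\<close>-degree one, \<open>H\<close> is a disjoint union of stars with
  centres in \<open>Z\<close>. Fixing \<open>Z\<close> pointwise, an embedding amounts to a permutation \<open>g\<close> of \<open>W\<close>
  sending every leaf \<open>y\<close> to a \<open>G\<close>-neighbour of its centre \<open>c y\<close>, i.e. a system of distinct
  representatives for the sets \<open>N\<^sub>G(c y)\<close>. Hall's condition holds for a set \<open>J \<subseteq> W\<close> of
  leaves: if \<open>N\<^sub>G(c ` J)\<close> is not all of \<open>W\<close>, a missed vertex has no neighbour among the
  centres \<open>c ` J\<close>, so by (2) there are at most \<open>(1 - \<epsilon>) z / 2\<close> of them; by (3) they carry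
  at most \<open>(1 - \<epsilon>)(1 + \<delta>) z M / 2 \<le> n / 2\<close> leaves, while by (1) a single centre already
  has more than \<open>n / 2\<close> neighbours.
\<close>

definition hall_condition :: "'i set \<Rightarrow> ('i \<Rightarrow> 'b set) \<Rightarrow> bool" where
  "hall_condition I A \<longleftrightarrow> (\<forall>J\<subseteq>I. card J \<le> card (\<Union> (A ` J)))"

lemma hall_condition_subset:
  "hall_condition I A \<Longrightarrow> J \<subseteq> I \<Longrightarrow> hall_condition J A"
  unfolding hall_condition_def by blast

lemma hall_condition_Diff_tight:
  assumes hall: "hall_condition I A" and fin: "finite I" "\<forall>i\<in>I. finite (A i)"
    and J: "J \<subseteq> I" and tight: "card (\<Union> (A ` J)) = card J"
  shows "hall_condition (I - J) (\<lambda>i. A i - \<Union> (A ` J))"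
  unfolding hall_condition_def
proof (intro allI impI)
  fix K assume K: "K \<subseteq> I - J"
  have finJK: "finite J" "finite K" using J K fin(1) finite_subset by blast+
  let ?U = "\<Union> (A ` J)" and ?V = "\<Union> (A ` (K \<union> J))"
  have "card K + card J = card (K \<union> J)"
    using K finJK by (subst card_Un_disjoint) auto
  also have "\<dots> \<le> card ?V"
    using hall K J unfolding hall_condition_def by (meson Diff_subset Un_least order_trans)
  also have "\<dots> = card (?V - ?U) + card ?U"
  proof -
    have "finite ?V" using finJK J K fin(2) by blast
    moreover have "?U \<subseteq> ?V" by blast
    ultimately show ?thesis by (metis card_Diff_subset card_mono finite_subset le_add_diff_inverse2)
  qed
  also have "?V - ?U = (\<Union>i\<in>K. A i - ?U)" by blast
  finally show "card K \<le> card (\<Union>i\<in>K. A i - ?U)"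
    using tight by simp
qed

lemma hall_condition_Diff_slack:
  assumes hall: "hall_condition I A"
    and slack: "\<forall>K\<subseteq>I. K \<noteq> {} \<longrightarrow> K \<noteq> I \<longrightarrow> card K < card (\<Union> (A ` K))"
    and i: "i \<in> I"
  shows "hall_condition (I - {i}) (\<lambda>j. A j - {x})"
  unfolding hall_condition_def
proof (intro allI impI)
  fix K assume K: "K \<subseteq> I - {i}"
  show "card K \<le> card (\<Union>j\<in>K. A j - {x})"
  proof (cases "K = {}")
    case False
    with K i slack have "card K < card (\<Union> (A ` K))" by blast
    moreover have "(\<Union>j\<in>K. A j - {x}) = \<Union> (A ` K) - {x}" by blast
    ultimately show ?thesis by (simp add: card_Diff_singleton_if) linarith
  qed simp
qed

text \<open>Halmos--Vaughan induction: if some nonempty proper subfamily is tight, match it and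
  the rest (with its neighbourhood removed) separately; otherwise one index may take any
  element of its set.\<close>

theorem hall_marriage:
  assumes "finite I" "\<forall>i\<in>I. finite (A i)" "hall_condition I A"
  shows "\<exists>f. inj_on f I \<and> (\<forall>i\<in>I. f i \<in> A i)"
  using assms
proof (induction "card I" arbitrary: I A rule: less_induct)
  case less
  note fin = less.prems(1,2) and hall = less.prems(3)
  consider (empty) "I = {}"
    | (tight) J where "J \<subseteq> I" "J \<noteq> {}" "J \<noteq> I" "card (\<Union> (A ` J)) = card J"
    | (slack) i where "i \<in> I"
        "\<forall>K\<subseteq>I. K \<noteq> {} \<longrightarrow> K \<noteq> I \<longrightarrow> card K < card (\<Union> (A ` K))"
  proof -
    have le: "card K \<le> card (\<Union> (A ` K))" if "K \<subseteq> I" for K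
      using hall that unfolding hall_condition_def by blast
    show thesis
    proof (cases "\<exists>J. J \<subseteq> I \<and> J \<noteq> {} \<and> J \<noteq> I \<and> card (\<Union> (A ` J)) = card J")
      case False
      then show thesis using that le by (metis ex_in_conv order.not_eq_order_implies_strict)
    qed (use that in blast)
  qed
  then show ?case
  proof cases
    case empty
    then show ?thesis by simp
  next
    case tight
    let ?U = "\<Union> (A ` J)"
    have "card J < card I" "card (I - J) < card I"
      using tight fin(1) by (auto intro!: psubset_card_mono)
    have "finite J" using tight(1) fin(1) finite_subset by blast
    have "\<exists>f. inj_on f J \<and> (\<forall>i\<in>J. f i \<in> A i)"
      by (rule less.hyps) (use \<open>card J < card I\<close> \<open>finite J\<close> tight(1) fin
          hall_condition_subset[OF hall tight(1)] in auto)
    then obtain f1 where f1: "inj_on f1 J" "\<forall>i\<in>J. f1 i \<in> A i" by blast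
    have "\<exists>f. inj_on f (I - J) \<and> (\<forall>i\<in>I - J. f i \<in> A i - ?U)"
      by (rule less.hyps) (use \<open>card (I - J) < card I\<close> fin
          hall_condition_Diff_tight[OF hall fin tight(1,4)] in auto)
    then obtain f2 where f2: "inj_on f2 (I - J)" "\<forall>i\<in>I - J. f2 i \<in> A i - ?U" by blast
    define f where "f i = (if i \<in> J then f1 i else f2 i)" for i
    have "inj_on f J" using f1(1) by (simp add: f_def inj_on_def)
    moreover have "inj_on f (I - J)" using f2(1) by (simp add: f_def inj_on_def)
    moreover have "f ` J \<subseteq> ?U" "f ` (I - J) \<inter> ?U = {}"
      using f1 f2 by (auto simp: f_def)
    ultimately have "inj_on f (J \<union> (I - J))"
      unfolding inj_on_Un by blast
    moreover have "J \<union> (I - J) = I" using tight by blast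
    ultimately show ?thesis using f1 f2 by (auto simp: f_def)
  next
    case slack
    have "card {i} \<le> card (\<Union> (A ` {i}))"
      using hall slack(1) unfolding hall_condition_def by blast
    then obtain x where x: "x \<in> A i" by fastforce
    have "card (I - {i}) < card I" using fin(1) slack(1) by (rule card_Diff1_less)
    then obtain f where f: "inj_on f (I - {i})" "\<forall>j\<in>I - {i}. f j \<in> A j - {x}"
      using less.hyps[of "I - {i}" "\<lambda>j. A j - {x}"] fin
        hall_condition_Diff_slack[OF hall slack(2,1)]
      by auto
    have "inj_on (f(i := x)) (insert i (I - {i}))"
      using f by (auto simp: inj_on_def)
    moreover have "insert i (I - {i}) = I" using slack(1) by blast
    ultimately show ?thesis using f x by (intro exI[of _ "f(i := x)"]) auto
  qed
qed

lemma card_eq_sum_card_fibres: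
  assumes "finite A" "finite B" "f ` A \<subseteq> B"
  shows "card A = (\<Sum>b\<in>B. card {a \<in> A. f a = b})"
proof -
  have "(\<Sum>b\<in>B. card {a \<in> A. f a = b}) = (\<Sum>a\<in>A. 1)"
    by (rule sum_multicount_gen) (use assms in \<open>auto simp: Collect_conj_eq\<close>)
  then show ?thesis by simp
qed

lemma card_le_card_image_mult:
  fixes D :: real
  assumes "finite B" "A \<subseteq> B" "\<forall>b\<in>f ` A. real (card {a \<in> B. f a = b}) \<le> D"
  shows "real (card A) \<le> real (card (f ` A)) * D"
proof -
  have "finite A" using assms(2,1) by (rule finite_subset)
  then have "card A = (\<Sum>b\<in>f ` A. card {a \<in> A. f a = b})"
    by (intro card_eq_sum_card_fibres) auto
  then have "real (card A) = (\<Sum>b\<in>f ` A. real (card {a \<in> A. f a = b}))"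
    by simp
  also have "\<dots> \<le> (\<Sum>b\<in>f ` A. D)"
  proof (rule sum_mono)
    fix b assume b: "b \<in> f ` A"
    have "card {a \<in> A. f a = b} \<le> card {a \<in> B. f a = b}"
      using assms(1,2) by (intro card_mono) auto
    then show "real (card {a \<in> A. f a = b}) \<le> D" using assms(3) b by force
  qed
  finally show ?thesis by simp
qed

lemma mult_one_minus_one_plus_le:
  fixes \<epsilon> \<delta> a :: real
  assumes "0 \<le> \<epsilon>" "\<epsilon> \<le> 1" "\<delta> \<le> \<epsilon>" "0 \<le> a"
  shows "(1 - \<epsilon>) * ((1 + \<delta>) * a) \<le> a"
proof -
  have "(1 - \<epsilon>) * (1 + \<delta>) \<le> (1 - \<epsilon>) * (1 + \<epsilon>)"
    using assms by (intro mult_left_mono) auto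
  also have "\<dots> \<le> 1" using assms by (simp add: algebra_simps)
  finally have "(1 - \<epsilon>) * (1 + \<delta>) * a \<le> 1 * a"
    using assms(4) by (rule mult_right_mono)
  then show ?thesis by (simp add: mult.assoc)
qed

definition nbhd :: "'a set set \<Rightarrow> 'a \<Rightarrow> 'a set" where
  "nbhd E v = {u. {v, u} \<in> E}"

lemma nbhd_sym: "u \<in> nbhd E v \<longleftrightarrow> v \<in> nbhd E u"
  unfolding nbhd_def by (simp add: insert_commute)

lemma bipartite_graph_commute: "bipartite_graph Z W E \<Longrightarrow> bipartite_graph W Z E"
  unfolding bipartite_graph_def by (metis inf_commute insert_commute)

lemma nbhd_subset:
  assumes "bipartite_graph Z W E" "v \<in> Z"
  shows "nbhd E v \<subseteq> W"
proof
  fix u assume "u \<in> nbhd E v"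
  then obtain x y where "x \<in> Z" "y \<in> W" "{v, u} = {x, y}"
    using assms(1) unfolding nbhd_def bipartite_graph_def by blast
  moreover have "v \<notin> W" using assms unfolding bipartite_graph_def by blast
  ultimately show "u \<in> W" by (auto simp: doubleton_eq_iff)
qed

lemma degree_eq_card_nbhd:
  assumes "bipartite_graph Z W E" "v \<in> Z"
  shows "degree E v = card (nbhd E v)"
proof -
  have "{e \<in> E. v \<in> e} = (\<lambda>u. {v, u}) ` nbhd E v"
  proof (intro equalityI subsetI)
    fix e assume e: "e \<in> {e \<in> E. v \<in> e}"
    then obtain x y where "x \<in> Z" "y \<in> W" "e = {x, y}"
      using assms(1) unfolding bipartite_graph_def by blast
    moreover have "v \<notin> W" using assms unfolding bipartite_graph_def by blast
    ultimately show "e \<in> (\<lambda>u. {v, u}) ` nbhd E v"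
      using e unfolding nbhd_def by auto
  qed (auto simp: nbhd_def)
  moreover have "inj_on (\<lambda>u. {v, u}) (nbhd E v)"
    by (auto intro!: inj_onI simp: doubleton_eq_iff)
  ultimately show ?thesis unfolding degree_def by (simp add: card_image)
qed

lemma degree_one_obtain_centre:
  assumes "bipartite_graph Z W H" "\<forall>y\<in>W. degree H y = 1"
  obtains c where "\<forall>y\<in>W. c y \<in> Z \<and> nbhd H y = {c y}"
proof -
  have "\<exists>x. x \<in> Z \<and> nbhd H y = {x}" if "y \<in> W" for y
  proof -
    note HWZ = bipartite_graph_commute[OF assms(1)]
    have "card (nbhd H y) = 1"
      using assms(2) degree_eq_card_nbhd[OF HWZ that] that by simp
    then obtain x where "nbhd H y = {x}" by (auto simp: card_1_singleton_iff)
    moreover have "nbhd H y \<subseteq> Z" using nbhd_subset[OF HWZ that] .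
    ultimately show ?thesis by blast
  qed
  then show thesis using that by metis
qed

lemma nbhd_eq_fibre:
  assumes "bipartite_graph Z W H" "\<forall>y\<in>W. c y \<in> Z \<and> nbhd H y = {c y}" "x \<in> Z"
  shows "nbhd H x = {y \<in> W. c y = x}"
proof (intro equalityI subsetI)
  fix y assume "y \<in> nbhd H x"
  moreover have "y \<in> W" using calculation nbhd_subset[OF assms(1,3)] by blast
  ultimately show "y \<in> {y \<in> W. c y = x}" using assms(2) nbhd_sym[of y H x] by auto
qed (use assms(2) nbhd_sym[of _ H] in auto)

lemma card_add_degree_le:
  assumes G: "bipartite_graph Z W G" and w: "w \<in> W"
    and X: "X \<subseteq> Z" "nbhd G w \<inter> X = {}"
  shows "card X + degree G w \<le> card Z"
proof -
  note GWZ = bipartite_graph_commute[OF G]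
  have finZ: "finite Z" using G unfolding bipartite_graph_def by blast
  have "nbhd G w \<subseteq> Z - X" using X nbhd_subset[OF GWZ w] by blast
  then have "degree G w \<le> card (Z - X)"
    using degree_eq_card_nbhd[OF GWZ w] finZ by (simp add: card_mono)
  moreover have "card (Z - X) = card Z - card X"
    using finZ X(1) by (meson card_Diff_subset finite_subset)
  ultimately show ?thesis using card_mono[OF finZ X(1)] by linarith
qed

lemma hall_condition_fibre_nbhd:
  fixes \<eta> D :: real
  assumes G: "bipartite_graph Z W G" and c: "c ` W \<subseteq> Z"
    and fibre: "\<forall>x\<in>Z. real (card {y \<in> W. c y = x}) \<le> D"
    and balance: "(1 - \<eta>) * real (card Z) * D \<le> real (card W)"
    and degZ: "\<forall>x\<in>Z. real (card W) / 2 < real (degree G x)"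
    and degW: "\<forall>w\<in>W. (1 + \<eta>) * real (card Z) / 2 < real (degree G w)"
  shows "hall_condition W (\<lambda>y. nbhd G (c y))"
  unfolding hall_condition_def
proof (intro allI impI)
  fix J assume J: "J \<subseteq> W"
  let ?N = "\<Union>y\<in>J. nbhd G (c y)" and ?X = "c ` J"
  have finW: "finite W" using G unfolding bipartite_graph_def by blast
  have "?N \<subseteq> W" using J c nbhd_subset[OF G] by blast
  then have finN: "finite ?N" using finW by (rule finite_subset)
  show "card J \<le> card ?N"
  proof (cases "W \<subseteq> ?N")
    case True
    then show ?thesis using J finW finN by (meson card_mono order_trans)
  next
    case False
    then obtain w where w: "w \<in> W" "w \<notin> ?N" by blast
    show ?thesis
    proof (cases "J = {}")
      case False
      then obtain j where j: "j \<in> J" by blast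
      then have cj: "c j \<in> Z" using J c by blast
      \<comment> \<open>\<open>w\<close> misses all centres in \<open>?X\<close>, so there are few of them and \<open>J\<close> is small.\<close>
      have "nbhd G w \<inter> ?X = {}" using w(2) nbhd_sym[of _ G] by blast
      moreover have "?X \<subseteq> Z" using J c by blast
      ultimately have "card ?X + degree G w \<le> card Z"
        using card_add_degree_le[OF G w(1)] by blast
      then have "real (card ?X) + real (degree G w) \<le> real (card Z)"
        by (simp only: of_nat_add[symmetric] of_nat_le_iff)
      then have X_small: "real (card ?X) \<le> (1 - \<eta>) * real (card Z) / 2"
        using degW[rule_format, OF w(1)] by (simp add: field_simps)
      have "real (card J) \<le> real (card ?X) * D"
        using finW J fibre c by (intro card_le_card_image_mult) auto
      also have "\<dots> \<le> (1 - \<eta>) * real (card Z) / 2 * D"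
        using X_small order_trans[OF of_nat_0_le_iff fibre[rule_format, OF cj]]
        by (rule mult_right_mono)
      also have "\<dots> \<le> real (card W) / 2" using balance by simp
      also have "\<dots> < real (card (nbhd G (c j)))"
        using degZ[rule_format, OF cj] degree_eq_card_nbhd[OF G cj] by simp
      also have "\<dots> \<le> real (card ?N)"
        using j finN by (auto intro!: card_mono)
      finally show ?thesis by simp
    qed simp
  qed
qed

lemma bip_embeds_star_forest:
  assumes G: "bipartite_graph Z W G" and H: "bipartite_graph Z W H"
    and c: "\<forall>y\<in>W. c y \<in> Z \<and> nbhd H y = {c y}"
    and hall: "hall_condition W (\<lambda>y. nbhd G (c y))"
  shows "bip_embeds Z W H G"
proof -
  have finW: "finite W" and disj: "Z \<inter> W = {}"
    using G unfolding bipartite_graph_def by auto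
  have "nbhd G (c y) \<subseteq> W" if "y \<in> W" for y
    using nbhd_subset[OF G] c that by blast
  then have "\<forall>y\<in>W. finite (nbhd G (c y))" using finW finite_subset by blast
  then obtain g where g: "inj_on g W" "\<forall>y\<in>W. g y \<in> nbhd G (c y)"
    using hall_marriage[OF finW _ hall] by blast
  have "g ` W \<subseteq> W" using g(2) c nbhd_subset[OF G] by blast
  then have "bij_betw g W W" using g(1) finW by (simp add: bij_betw_def endo_inj_surj)
  define f where "f v = (if v \<in> W then g v else v)" for v
  have "bij_betw f W W"
    using \<open>bij_betw g W W\<close> by (rule bij_betw_cong[THEN iffD1, rotated]) (simp add: f_def)
  moreover have "bij_betw f Z Z"
    using bij_betw_id by (rule bij_betw_cong[THEN iffD1, rotated]) (use disj in \<open>auto simp: f_def\<close>)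
  moreover have "f ` e \<in> G" if "e \<in> H" for e
  proof -
    obtain x y where xy: "x \<in> Z" "y \<in> W" "e = {x, y}"
      using H \<open>e \<in> H\<close> unfolding bipartite_graph_def by blast
    then have "x \<in> nbhd H y" using \<open>e \<in> H\<close> nbhd_sym[of x H y] by (simp add: nbhd_def)
    then have "x = c y" using c xy(2) by auto
    moreover have "f ` e = {x, g y}" using xy disj by (auto simp: f_def)
    ultimately show ?thesis using g(2) xy(2) by (simp add: nbhd_def)
  qed
  ultimately show ?thesis unfolding bip_embeds_def by blast
qed

theorem lemma2:
  fixes Z W :: "'a set" and G H :: "'a set set"
    and \<epsilon> \<delta> :: real and M :: nat
  assumes eps: "0 < \<epsilon>" "\<epsilon> < 1/2"
    and G: "bipartite_graph Z W G" and H: "bipartite_graph Z W H"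
    and z: "real (card Z) > 2 / \<epsilon>"
    and d1: "\<forall>x\<in>Z. real (degree G x) > (1/2 + \<epsilon>) * real (card W)"
    and d2: "\<forall>y\<in>W. real (degree G y) > (1/2 + \<epsilon>/2) * real (card Z)"
    and d3: "\<delta> \<le> \<epsilon> / 10"
      "\<forall>x\<in>Z. real M \<le> real (degree H x) \<and> real (degree H x) \<le> real M * (1 + \<delta>)"
    and d4: "\<forall>y\<in>W. degree H y = 1"
  shows "bip_embeds Z W H G"
proof -
  have finZ: "finite Z" and finW: "finite W" using G unfolding bipartite_graph_def by auto
  obtain c where c: "\<forall>y\<in>W. c y \<in> Z \<and> nbhd H y = {c y}"
    using degree_one_obtain_centre[OF H d4] .
  have fibre: "card {y \<in> W. c y = x} = degree H x" if "x \<in> Z" for x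
    using nbhd_eq_fibre[OF H c that] degree_eq_card_nbhd[OF H that] by simp
  have "card W = (\<Sum>x\<in>Z. card {y \<in> W. c y = x})"
    using card_eq_sum_card_fibres[OF finW finZ, of c] c by blast
  then have "real (card Z) * real M \<le> real (card W)"
    using fibre d3(2) sum_mono[of Z "\<lambda>_. real M" "\<lambda>x. real (degree H x)"] by simp
  moreover have "(1 - \<epsilon>) * real (card Z) * (real M * (1 + \<delta>)) \<le> real (card Z) * real M"
    using mult_one_minus_one_plus_le[of \<epsilon> \<delta> "real (card Z) * real M"] eps d3(1)
    by (simp add: algebra_simps)
  moreover have "real (card W) / 2 < real (degree G x)" if "x \<in> Z" for x
  proof -
    have "real (card W) / 2 \<le> (1/2 + \<epsilon>) * real (card W)" using eps by (simp add: algebra_simps)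
    then show ?thesis using d1 that by fastforce
  qed
  moreover have "(1 + \<epsilon>) * real (card Z) / 2 < real (degree G y)" if "y \<in> W" for y
    using d2[rule_format, OF that] by (simp add: field_simps)
  ultimately have "hall_condition W (\<lambda>y. nbhd G (c y))"
    using c fibre d3(2)
    by (intro hall_condition_fibre_nbhd[OF G, of c "real M * (1 + \<delta>)" \<epsilon>]) auto
  then show ?thesis by (rule bip_embeds_star_forest[OF G H c])
qed

end
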